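(* Let $\Gamma_{\ge1}$ be a set of letters of arity at least $1$ and $\Gamma_0$ a set of constants, and consider the following nondeterministic procedure on a context equation $u=v$. (1) For each variable $x$: guess whether $x$ is to be replaced by a constant and if so guess a constant $c\in\Gamma_0$ and replace every occurrence of $x$ by $c$. (2) For each context variable $X$: guess a letter $f$ (intended as the last letter of $\sigma(X)$); if $f\in\Gamma_{\ge1}$ and the current equation contains a subterm $X(a)$ with $a\in\Gamma_0$, let $m=\mathrm{ar}(f)$, guess $1\le i\le m$, and replace every subterm $X(s)$ by $X(f(x_1,\dots,x_{i-1},s,x_{i+1},\dots,x_m))$ with fresh variables $x_1,\dots,x_{i-1},x_{i+1},\dots,x_m$ (the same for all occurrences of $X$); then guess whether $X$ is removed, in which case replace each $X(s)$ by $s$. (3) For each variable introduced in step (2), act as in step (1). Then: (a) whatever the choices, if the resulting equation $u'=v'$ has a solution, so does $u=v$; (b) if $u=v$ has a non-empty solution $\sigma$, then for some choices the resulting equation $u'=v'$ has a non-empty solution $\sigma'$ such that $\sigma'(u')=\sigma(u)$ and there is no crossing father-leaf pair $(f,a)$ with $f\in\Gamma_{\ge1}$ and $a\in\Gamma_0$ with respect to $\sigma'$.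
   Context: $\Sigma$ is a ranked signature, $\Omega\notin\Sigma$ a special constant; context variables have arity $1$, variables arity $0$. Ground terms, ground contexts (exactly one $\Omega$), terms and context equations $u=v$ are as usual; a substitution $\sigma$ assigns ground contexts to context variables and ground terms to variables, extended by $\sigma(a)=a$, $\sigma(f(t_1,\dots,t_m))=f(\sigma(t_1),\dots,\sigma(t_m))$, $\sigma(Xt)=\sigma(X)\sigma(t)$; a solution satisfies $\sigma(u)=\sigma(v)$; it is non-empty if $\sigma(X)\neq\Omega$ for every context variable $X$ occurring in the equation. The last letter of $\sigma(X)$ is the label of the father of $\Omega$ in $\sigma(X)$. Each node of $\sigma(u)$ comes either from an explicit letter occurrence of $u$ or from $\sigma(X)$ or $\sigma(x)$ for a particular occurrence of $X$ or $x$. An occurrence in $\sigma(u)$ or $\sigma(v)$ of a node labelled $f$ ($\mathrm{ar}(f)\ge1$) with a child labelled by a constant $a$ is explicit if both come from explicit letters, implicit if both come from the same $\sigma(X)$ or $\sigma(x)$, and crossing otherwise; $(f,a)$ is a crossing father-leaf pair w.r.t. $\sigma$ if it has a crossing occurrence. *)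

theory Defs
  imports Main
begin

text \<open>Letters have type 'f, with arity function ar passed explicitly. Variables have type 'v,
  context variables have type 'c. CApp X t stands for the term X(t).\<close>

datatype ('f,'v,'c) trm = Fun 'f "('f,'v,'c) trm list" | Var 'v | CApp 'c "('f,'v,'c) trm"

datatype 'f gterm = GFun 'f "'f gterm list"

text \<open>Ground contexts: Hole is the constant Omega; GCtx f l C r is f(l, C, r).\<close>
datatype 'f gctxt = Hole | GCtx 'f "'f gterm list" "'f gctxt" "'f gterm list"

fun wf_trm :: "('f \<Rightarrow> nat) \<Rightarrow> ('f,'v,'c) trm \<Rightarrow> bool" where
  "wf_trm ar (Fun f ts) = (length ts = ar f \<and> (\<forall>t\<in>set ts. wf_trm ar t))"
| "wf_trm ar (Var x) = True"
| "wf_trm ar (CApp X t) = wf_trm ar t"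

fun wf_gterm :: "('f \<Rightarrow> nat) \<Rightarrow> 'f gterm \<Rightarrow> bool" where
  "wf_gterm ar (GFun f ts) = (length ts = ar f \<and> (\<forall>t\<in>set ts. wf_gterm ar t))"

fun wf_gctxt :: "('f \<Rightarrow> nat) \<Rightarrow> 'f gctxt \<Rightarrow> bool" where
  "wf_gctxt ar Hole = True"
| "wf_gctxt ar (GCtx f l C r) = (length l + 1 + length r = ar f \<and>
      (\<forall>t\<in>set l. wf_gterm ar t) \<and> wf_gctxt ar C \<and> (\<forall>t\<in>set r. wf_gterm ar t))"

fun cfill :: "'f gctxt \<Rightarrow> 'f gterm \<Rightarrow> 'f gterm" where
  "cfill Hole t = t"
| "cfill (GCtx f l C r) t = GFun f (l @ [cfill C t] @ r)"

fun vars :: "('f,'v,'c) trm \<Rightarrow> 'v set" where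
  "vars (Fun f ts) = \<Union> (set (map vars ts))"
| "vars (Var x) = {x}"
| "vars (CApp X t) = vars t"

fun cvars :: "('f,'v,'c) trm \<Rightarrow> 'c set" where
  "cvars (Fun f ts) = \<Union> (set (map cvars ts))"
| "cvars (Var x) = {}"
| "cvars (CApp X t) = insert X (cvars t)"

fun subterms :: "('f,'v,'c) trm \<Rightarrow> ('f,'v,'c) trm set" where
  "subterms (Fun f ts) = insert (Fun f ts) (\<Union> (set (map subterms ts)))"
| "subterms (Var x) = {Var x}"
| "subterms (CApp X t) = insert (CApp X t) (subterms t)"

type_synonym ('f,'v,'c) equation = "('f,'v,'c) trm \<times> ('f,'v,'c) trm"

definition vars_eq :: "('f,'v,'c) equation \<Rightarrow> 'v set" where
  "vars_eq e = vars (fst e) \<union> vars (snd e)"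

definition cvars_eq :: "('f,'v,'c) equation \<Rightarrow> 'c set" where
  "cvars_eq e = cvars (fst e) \<union> cvars (snd e)"

definition subterms_eq :: "('f,'v,'c) equation \<Rightarrow> ('f,'v,'c) trm set" where
  "subterms_eq e = subterms (fst e) \<union> subterms (snd e)"

definition map_eq :: "(('f,'v,'c) trm \<Rightarrow> ('f,'v,'c) trm) \<Rightarrow> ('f,'v,'c) equation \<Rightarrow> ('f,'v,'c) equation" where
  "map_eq g e = (g (fst e), g (snd e))"

text \<open>A substitution is a pair (sc, sv): sc assigns ground contexts to context variables,
  sv assigns ground terms to variables.\<close>

fun gsubst :: "('c \<Rightarrow> 'f gctxt) \<Rightarrow> ('v \<Rightarrow> 'f gterm) \<Rightarrow> ('f,'v,'c) trm \<Rightarrow> 'f gterm" where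
  "gsubst sc sv (Fun f ts) = GFun f (map (gsubst sc sv) ts)"
| "gsubst sc sv (Var x) = sv x"
| "gsubst sc sv (CApp X t) = cfill (sc X) (gsubst sc sv t)"

definition wf_subst :: "('f \<Rightarrow> nat) \<Rightarrow> ('c \<Rightarrow> 'f gctxt) \<Rightarrow> ('v \<Rightarrow> 'f gterm) \<Rightarrow> bool" where
  "wf_subst ar sc sv \<longleftrightarrow> (\<forall>X. wf_gctxt ar (sc X)) \<and> (\<forall>x. wf_gterm ar (sv x))"

definition is_solution :: "('f \<Rightarrow> nat) \<Rightarrow> ('c \<Rightarrow> 'f gctxt) \<Rightarrow> ('v \<Rightarrow> 'f gterm)
    \<Rightarrow> ('f,'v,'c) equation \<Rightarrow> bool" where
  "is_solution ar sc sv e \<longleftrightarrow> wf_subst ar sc sv \<and> gsubst sc sv (fst e) = gsubst sc sv (snd e)"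

definition nonempty_sol :: "('c \<Rightarrow> 'f gctxt) \<Rightarrow> ('f,'v,'c) equation \<Rightarrow> bool" where
  "nonempty_sol sc e \<longleftrightarrow> (\<forall>X\<in>cvars_eq e. sc X \<noteq> Hole)"

text \<open>Origin of a node of sigma(u) / sigma(v): an explicit letter, or the occurrence of a
  variable / context variable at position p in side s (True = u, False = v).\<close>
datatype orig = Expl | Occ bool "nat list"

datatype 'f atree = ANode 'f orig "'f atree list"

fun lab :: "orig \<Rightarrow> 'f gterm \<Rightarrow> 'f atree" where
  "lab o' (GFun f ts) = ANode f o' (map (lab o') ts)"

fun fill_lab :: "orig \<Rightarrow> 'f gctxt \<Rightarrow> 'f atree \<Rightarrow> 'f atree" where
  "fill_lab o' Hole t = t"
| "fill_lab o' (GCtx f l C r) t = ANode f o' (map (lab o') l @ [fill_lab o' C t] @ map (lab o') r)"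

fun aeval :: "('c \<Rightarrow> 'f gctxt) \<Rightarrow> ('v \<Rightarrow> 'f gterm) \<Rightarrow> bool \<Rightarrow> nat list \<Rightarrow> ('f,'v,'c) trm \<Rightarrow> 'f atree"
and aevals :: "('c \<Rightarrow> 'f gctxt) \<Rightarrow> ('v \<Rightarrow> 'f gterm) \<Rightarrow> bool \<Rightarrow> nat list \<Rightarrow> nat \<Rightarrow> ('f,'v,'c) trm list \<Rightarrow> 'f atree list" where
  "aeval sc sv s p (Fun f ts) = ANode f Expl (aevals sc sv s p 0 ts)"
| "aeval sc sv s p (Var x) = lab (Occ s p) (sv x)"
| "aeval sc sv s p (CApp X t) = fill_lab (Occ s p) (sc X) (aeval sc sv s (p @ [0]) t)"
| "aevals sc sv s p i [] = []"
| "aevals sc sv s p i (t # ts) = aeval sc sv s (p @ [i]) t # aevals sc sv s p (Suc i) ts"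

fun asubtrees :: "'f atree \<Rightarrow> 'f atree set" where
  "asubtrees (ANode f o' ts) = insert (ANode f o' ts) (\<Union> (set (map asubtrees ts)))"

text \<open>A crossing occurrence: a node labelled f (arity at least 1) with a child labelled by a
  constant a, the two nodes having different origins (neither both explicit nor both coming
  from the same occurrence of a (context) variable).\<close>
definition crossing_occ :: "('f \<Rightarrow> nat) \<Rightarrow> 'f atree \<Rightarrow> 'f \<Rightarrow> 'f \<Rightarrow> bool" where
  "crossing_occ ar T f a \<longleftrightarrow> 1 \<le> ar f \<and> ar a = 0 \<and>
     (\<exists>o1 cs. ANode f o1 cs \<in> asubtrees T \<and> (\<exists>o2 ds. ANode a o2 ds \<in> set cs \<and> o1 \<noteq> o2))"

definition crossing_pair :: "('f \<Rightarrow> nat) \<Rightarrow> ('c \<Rightarrow> 'f gctxt) \<Rightarrow> ('v \<Rightarrow> 'f gterm)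
    \<Rightarrow> ('f,'v,'c) equation \<Rightarrow> 'f \<Rightarrow> 'f \<Rightarrow> bool" where
  "crossing_pair ar sc sv e f a \<longleftrightarrow>
     crossing_occ ar (aeval sc sv True [] (fst e)) f a \<or> crossing_occ ar (aeval sc sv False [] (snd e)) f a"

fun repl_vars :: "('v \<Rightarrow> 'f option) \<Rightarrow> ('f,'v,'c) trm \<Rightarrow> ('f,'v,'c) trm" where
  "repl_vars \<rho> (Fun f ts) = Fun f (map (repl_vars \<rho>) ts)"
| "repl_vars \<rho> (Var x) = (case \<rho> x of None \<Rightarrow> Var x | Some c \<Rightarrow> Fun c [])"
| "repl_vars \<rho> (CApp X t) = CApp X (repl_vars \<rho> t)"

fun pop_ctx :: "'c \<Rightarrow> 'f \<Rightarrow> 'v list \<Rightarrow> 'v list \<Rightarrow> ('f,'v,'c) trm \<Rightarrow> ('f,'v,'c) trm" where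
  "pop_ctx X f xs1 xs2 (Fun g ts) = Fun g (map (pop_ctx X f xs1 xs2) ts)"
| "pop_ctx X f xs1 xs2 (Var x) = Var x"
| "pop_ctx X f xs1 xs2 (CApp Y t) =
     (if Y = X then CApp X (Fun f (map Var xs1 @ [pop_ctx X f xs1 xs2 t] @ map Var xs2))
      else CApp Y (pop_ctx X f xs1 xs2 t))"

fun remove_ctx :: "'c \<Rightarrow> ('f,'v,'c) trm \<Rightarrow> ('f,'v,'c) trm" where
  "remove_ctx X (Fun g ts) = Fun g (map (remove_ctx X) ts)"
| "remove_ctx X (Var x) = Var x"
| "remove_ctx X (CApp Y t) = (if Y = X then remove_ctx X t else CApp Y (remove_ctx X t))"

text \<open>Step (2) for a single context variable X on the current equation e; V is the set of
  variables of the original equation (fresh variables avoid V and the current equation).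
  Either nothing is popped (the guessed letter is not in G1 / no subterm X(a)), or a letter
  f in G1 is popped at argument position length xs1 + 1, provided some X(a), a in G0, occurs.\<close>
definition pop_step :: "('f \<Rightarrow> nat) \<Rightarrow> 'f set \<Rightarrow> 'f set \<Rightarrow> 'v set \<Rightarrow> 'c
    \<Rightarrow> ('f,'v,'c) equation \<Rightarrow> ('f,'v,'c) equation \<Rightarrow> bool" where
  "pop_step ar G1 G0 V X e e' \<longleftrightarrow> e' = e \<or>
     (\<exists>f xs1 xs2 a. f \<in> G1 \<and> a \<in> G0 \<and> CApp X (Fun a []) \<in> subterms_eq e \<and>
        length xs1 + 1 + length xs2 = ar f \<and> distinct (xs1 @ xs2) \<and>
        set (xs1 @ xs2) \<inter> (V \<union> vars_eq e) = {} \<and>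
        e' = map_eq (pop_ctx X f xs1 xs2) e)"

definition cvar_step :: "('f \<Rightarrow> nat) \<Rightarrow> 'f set \<Rightarrow> 'f set \<Rightarrow> 'v set \<Rightarrow> 'c
    \<Rightarrow> ('f,'v,'c) equation \<Rightarrow> ('f,'v,'c) equation \<Rightarrow> bool" where
  "cvar_step ar G1 G0 V X e e'' \<longleftrightarrow>
     (\<exists>e'. pop_step ar G1 G0 V X e e' \<and> (e'' = e' \<or> e'' = map_eq (remove_ctx X) e'))"

fun cvar_steps :: "('f \<Rightarrow> nat) \<Rightarrow> 'f set \<Rightarrow> 'f set \<Rightarrow> 'v set \<Rightarrow> 'c list
    \<Rightarrow> ('f,'v,'c) equation \<Rightarrow> ('f,'v,'c) equation \<Rightarrow> bool" where
  "cvar_steps ar G1 G0 V [] e e' = (e' = e)"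
| "cvar_steps ar G1 G0 V (X # Xs) e e'' = (\<exists>e'. cvar_step ar G1 G0 V X e e' \<and> cvar_steps ar G1 G0 V Xs e' e'')"

text \<open>The whole procedure: e' is a possible outcome on input e. The context variables are
  processed one after another, in some (guessed) order.\<close>
definition proc :: "('f \<Rightarrow> nat) \<Rightarrow> 'f set \<Rightarrow> 'f set \<Rightarrow> ('f,'v,'c) equation \<Rightarrow> ('f,'v,'c) equation \<Rightarrow> bool" where
  "proc ar G1 G0 e e' \<longleftrightarrow>
     (\<exists>\<rho>1 \<rho>2 Xs e2.
        (\<forall>x c. \<rho>1 x = Some c \<longrightarrow> c \<in> G0) \<and>
        distinct Xs \<and> set Xs = cvars_eq e \<and>
        cvar_steps ar G1 G0 (vars_eq e) Xs (map_eq (repl_vars \<rho>1) e) e2 \<and>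
        (\<forall>x c. \<rho>2 x = Some c \<longrightarrow> c \<in> G0) \<and> (\<forall>x\<in>vars_eq e. \<rho>2 x = None) \<and>
        e' = map_eq (repl_vars \<rho>2) e2)"

end

theory Submission
  imports Defs
begin

text \<open>Soundness holds step by step: a variable replaced by a constant is solved by that
  constant, a popped letter \<open>f(x\<^sub>1,\<dots>,s,\<dots>,x\<^sub>m)\<close> is absorbed back into the context as its last
  letter, and a removed context variable is mapped to the hole.

  For completeness every guess is read off the given solution \<open>\<sigma>\<close>: a variable becomes the
  constant \<open>c\<close> exactly when \<open>\<sigma>\<close> maps it to \<open>c\<close>, and \<open>X\<close> pops the last letter \<open>f\<close> of \<open>\<sigma>(X)\<close>
  exactly when \<open>f \<in> \<Gamma>\<^sub>\<ge>\<^sub>1\<close> and some \<open>X(a)\<close> with \<open>a \<in> \<Gamma>\<^sub>0\<close> occurs; the fresh variables take the siblings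
  of the hole, and \<open>X\<close> is removed once nothing of \<open>\<sigma>(X)\<close> is left. The fresh variables are
  never arguments of context variables, so guessing constants for them in step (3) creates no
  new \<open>X(a)\<close>. In the result no variable is mapped to a constant of \<open>\<Gamma>\<^sub>0\<close>, no context variable to
  the hole, and no context variable whose last letter lies in \<open>\<Gamma>\<^sub>\<ge>\<^sub>1\<close> is applied to a constant of
  \<open>\<Gamma>\<^sub>0\<close>. Hence a constant below a letter of \<open>\<Gamma>\<^sub>\<ge>\<^sub>1\<close> always has the origin of its father.\<close>

lemma subterms_refl: "t \<in> subterms t"
  by (cases t) auto

lemma subterms_trans: "s \<in> subterms t \<Longrightarrow> r \<in> subterms s \<Longrightarrow> r \<in> subterms t"
  by (induction t) auto

lemma CApp_arg_in_subterms: "CApp X s \<in> subterms t \<Longrightarrow> s \<in> subterms t"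
  using subterms_trans[of "CApp X s" t s] subterms_refl[of s] by auto

lemma Var_in_subterms_iff: "Var x \<in> subterms t \<longleftrightarrow> x \<in> vars t"
  by (induction t) auto

lemma cvars_iff_CApp_in_subterms: "X \<in> cvars t \<longleftrightarrow> (\<exists>s. CApp X s \<in> subterms t)"
  by (induction t) auto

lemma wf_trm_subterm: "wf_trm ar t \<Longrightarrow> s \<in> subterms t \<Longrightarrow> wf_trm ar s"
  by (induction t) auto

lemma finite_vars: "finite (vars t)"
  by (induction t) auto

lemma finite_cvars: "finite (cvars t)"
  by (induction t) auto

lemma gsubst_cong:
  "(\<And>x. x \<in> vars t \<Longrightarrow> sv x = sv' x) \<Longrightarrow> (\<And>X. X \<in> cvars t \<Longrightarrow> sc X = sc' X)
    \<Longrightarrow> gsubst sc sv t = gsubst sc' sv' t"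
  by (induction t) (fastforce intro!: map_cong)+

lemma fst_map_eq [simp]: "fst (map_eq g e) = g (fst e)"
  and snd_map_eq [simp]: "snd (map_eq g e) = g (snd e)"
  by (simp_all add: map_eq_def)

fun ccomp :: "'f gctxt \<Rightarrow> 'f gctxt \<Rightarrow> 'f gctxt" where
  "ccomp Hole D = D"
| "ccomp (GCtx f l C r) D = GCtx f l (ccomp C D) r"

lemma cfill_ccomp: "cfill (ccomp C D) t = cfill C (cfill D t)"
  by (induction C) auto

lemma wf_gctxt_ccomp: "wf_gctxt ar (ccomp C D) \<longleftrightarrow> wf_gctxt ar C \<and> wf_gctxt ar D"
  by (induction C) auto

lemma gctxt_split_last: "C \<noteq> Hole \<Longrightarrow> \<exists>C' f l r. C = ccomp C' (GCtx f l Hole r)"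
proof (induction C)
  case (GCtx f l C r)
  show ?case
  proof (cases "C = Hole")
    case True
    then show ?thesis by (intro exI[of _ Hole]) auto
  next
    case False
    then obtain C' g l' r' where "C = ccomp C' (GCtx g l' Hole r')"
      using GCtx.IH by blast
    then show ?thesis by (intro exI[of _ "GCtx f l C' r"]) auto
  qed
qed simp

fun last_letter :: "'f gctxt \<Rightarrow> 'f" where
  "last_letter Hole = undefined"
| "last_letter (GCtx f l C r) = (if C = Hole then f else last_letter C)"

lemma ccomp_GCtx_neq_Hole [simp]: "ccomp C (GCtx f l D r) \<noteq> Hole"
  by (cases C) auto

lemma last_letter_ccomp: "last_letter (ccomp C (GCtx f l Hole r)) = f"
  by (induction C) auto

fun groot :: "'f gterm \<Rightarrow> 'f" where
  "groot (GFun f ts) = f"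

lemma wf_gterm_constant: "wf_gterm ar g \<Longrightarrow> ar (groot g) = 0 \<Longrightarrow> g = GFun (groot g) []"
  by (cases g) auto

lemma gsubst_repl_vars:
  "gsubst sc sv (repl_vars \<rho> t) = gsubst sc (\<lambda>x. case \<rho> x of None \<Rightarrow> sv x | Some c \<Rightarrow> GFun c []) t"
  by (induction t) (auto split: option.split)

lemma gsubst_pop_ctx:
  "gsubst sc sv (pop_ctx X f xs1 xs2 t) =
     gsubst (sc(X := ccomp (sc X) (GCtx f (map sv xs1) Hole (map sv xs2)))) sv t"
  by (induction t) (auto simp: cfill_ccomp o_def)

lemma gsubst_remove_ctx: "gsubst sc sv (remove_ctx X t) = gsubst (sc(X := Hole)) sv t"
  by (induction t) auto

section \<open>Soundness\<close>

lemma solution_of_repl_vars: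
  assumes "is_solution ar sc sv (map_eq (repl_vars \<rho>) e)" and "\<forall>x c. \<rho> x = Some c \<longrightarrow> ar c = 0"
  shows "is_solution ar sc (\<lambda>x. case \<rho> x of None \<Rightarrow> sv x | Some c \<Rightarrow> GFun c []) e"
  using assms by (auto simp: is_solution_def wf_subst_def map_eq_def gsubst_repl_vars split: option.split)

lemma solution_of_pop_ctx:
  assumes "is_solution ar sc sv (map_eq (pop_ctx X f xs1 xs2) e)"
    and "length xs1 + 1 + length xs2 = ar f"
  shows "is_solution ar (sc(X := ccomp (sc X) (GCtx f (map sv xs1) Hole (map sv xs2)))) sv e"
  using assms by (auto simp: is_solution_def wf_subst_def map_eq_def gsubst_pop_ctx wf_gctxt_ccomp)

lemma solution_of_remove_ctx:
  "is_solution ar sc sv (map_eq (remove_ctx X) e) \<Longrightarrow> is_solution ar (sc(X := Hole)) sv e"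
  by (auto simp: is_solution_def wf_subst_def map_eq_def gsubst_remove_ctx)

lemma cvar_step_solvable:
  "cvar_step ar G1 G0 V X e e' \<Longrightarrow> is_solution ar sc sv e' \<Longrightarrow> \<exists>sc. is_solution ar sc sv e"
  unfolding cvar_step_def pop_step_def by (metis solution_of_remove_ctx solution_of_pop_ctx)

lemma cvar_steps_solvable:
  "cvar_steps ar G1 G0 V Xs e e' \<Longrightarrow> is_solution ar sc sv e' \<Longrightarrow> \<exists>sc. is_solution ar sc sv e"
proof (induction Xs arbitrary: e sc)
  case (Cons X Xs)
  then obtain e1 where "cvar_step ar G1 G0 V X e e1" "cvar_steps ar G1 G0 V Xs e1 e'"
    by auto
  with Cons.IH Cons.prems(2) show ?case by (metis cvar_step_solvable)
qed auto

theorem proc_sound: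
  assumes "\<forall>a\<in>G0. ar a = 0" and "proc ar G1 G0 e e'" and "is_solution ar sc' sv' e'"
  shows "\<exists>sc sv. is_solution ar sc sv e"
proof -
  obtain \<rho>1 \<rho>2 Xs e2 where
      \<rho>1: "\<forall>x c. \<rho>1 x = Some c \<longrightarrow> c \<in> G0"
    and steps: "cvar_steps ar G1 G0 (vars_eq e) Xs (map_eq (repl_vars \<rho>1) e) e2"
    and \<rho>2: "\<forall>x c. \<rho>2 x = Some c \<longrightarrow> c \<in> G0" and e': "e' = map_eq (repl_vars \<rho>2) e2"
    using assms(2) unfolding proc_def by blast
  obtain sv2 where "is_solution ar sc' sv2 e2"
    using solution_of_repl_vars[of ar sc' sv' \<rho>2 e2] assms(1,3) \<rho>2 e' by blast
  then obtain sc1 where "is_solution ar sc1 sv2 (map_eq (repl_vars \<rho>1) e)"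
    using cvar_steps_solvable[OF steps] by blast
  then show ?thesis
    using solution_of_repl_vars[of ar sc1 sv2 \<rho>1 e] assms(1) \<rho>1 by blast
qed

section \<open>Father-leaf pairs without crossing occurrences\<close>

fun origin :: "'f atree \<Rightarrow> orig" where
  "origin (ANode f o' cs) = o'"

lemma asubtrees_lab:
  "N \<in> asubtrees (lab o' g) \<Longrightarrow> \<exists>f cs. N = ANode f o' cs \<and> (\<forall>c\<in>set cs. origin c = o')"
proof (induction g arbitrary: N)
  case (GFun f ts)
  have "origin (lab o' t) = o'" for t by (cases t) auto
  with GFun show ?case by auto
qed

lemma asubtrees_fill_lab:
  "N \<in> asubtrees (fill_lab o' C T) \<Longrightarrow> N \<in> asubtrees T \<or>
     (\<exists>f cs. N = ANode f o' cs \<and>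
        (\<forall>c\<in>set cs. origin c = o' \<or> (c = T \<and> C \<noteq> Hole \<and> f = last_letter C)))"
proof (induction C arbitrary: N)
  case (GCtx f l C r)
  have lab: "origin (lab o' t) = o'" for t by (cases t) auto
  have fill: "C \<noteq> Hole \<Longrightarrow> origin (fill_lab o' C T) = o'" by (cases C) auto
  from GCtx.prems consider
      "N = fill_lab o' (GCtx f l C r) T"
    | t where "t \<in> set l \<union> set r" "N \<in> asubtrees (lab o' t)"
    | "N \<in> asubtrees (fill_lab o' C T)"
    by auto
  then show ?case
  proof cases
    case 1
    then show ?thesis using lab fill by (cases "C = Hole") auto
  next
    case 2
    then show ?thesis using asubtrees_lab by metis
  next
    case 3
    then show ?thesis using GCtx.IH by fastforce
  qed
qed simp

lemma aevals_elem:
  "c \<in> set (aevals sc sv s p i ts) \<Longrightarrow> \<exists>q t. t \<in> set ts \<and> c = aeval sc sv s q t"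
  by (induction ts arbitrary: i) fastforce+

definition crossing_free :: "('f \<Rightarrow> nat) \<Rightarrow> 'f set \<Rightarrow> 'f set \<Rightarrow> ('c \<Rightarrow> 'f gctxt) \<Rightarrow> ('v \<Rightarrow> 'f gterm)
    \<Rightarrow> ('f,'v,'c) trm \<Rightarrow> bool" where
  "crossing_free ar G1 G0 sc sv t \<longleftrightarrow> wf_trm ar t \<and>
     (\<forall>x. Var x \<in> subterms t \<longrightarrow> groot (sv x) \<notin> G0) \<and>
     (\<forall>Y s. CApp Y s \<in> subterms t \<longrightarrow>
        sc Y \<noteq> Hole \<and> (last_letter (sc Y) \<in> G1 \<longrightarrow> (\<forall>a\<in>G0. s \<noteq> Fun a [])))"

lemma crossing_free_subterm:
  assumes "crossing_free ar G1 G0 sc sv t" and "t' \<in> subterms t"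
  shows "crossing_free ar G1 G0 sc sv t'"
  using assms wf_trm_subterm[of ar t t'] subterms_trans[OF assms(2)]
  unfolding crossing_free_def by blast

lemma aeval_constant_root:
  assumes "aeval sc sv s p t = ANode a o' ds" and "a \<in> G0"
    and "crossing_free ar G1 G0 sc sv t" and "wf_subst ar sc sv" and "\<forall>a\<in>G0. ar a = 0"
  shows "t = Fun a [] \<and> o' = Expl"
proof (cases t)
  case (Fun g ts)
  then show ?thesis using assms by (auto simp: crossing_free_def)
next
  case (Var x)
  then show ?thesis using assms by (cases "sv x") (auto simp: crossing_free_def)
next
  case (CApp Y t0)
  then obtain h l C r where "sc Y = GCtx h l C r"
    using assms(3) by (cases "sc Y") (auto simp: crossing_free_def)
  moreover have "wf_gctxt ar (sc Y)" using assms(4) by (simp add: wf_subst_def)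
  ultimately show ?thesis using assms CApp by auto
qed

lemma crossing_free_FunD:
  assumes "crossing_free ar G1 G0 sc sv (Fun g ts)" and "t \<in> set ts"
  shows "crossing_free ar G1 G0 sc sv t"
proof -
  have "t \<in> subterms (Fun g ts)" using assms(2) subterms_refl[of t] by auto
  then show ?thesis using crossing_free_subterm[OF assms(1)] by simp
qed

lemma crossing_free_CAppD:
  "crossing_free ar G1 G0 sc sv (CApp Y t) \<Longrightarrow> crossing_free ar G1 G0 sc sv t"
  using crossing_free_subterm subterms_refl[of t] by fastforce

lemma crossing_free_CApp_arg_constant:
  assumes "crossing_free ar G1 G0 sc sv (CApp Y t)" and "wf_subst ar sc sv" and "\<forall>a\<in>G0. ar a = 0"
    and "aeval sc sv s p t = ANode a o' ds" and "a \<in> G0"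
  shows "last_letter (sc Y) \<notin> G1"
proof
  assume last: "last_letter (sc Y) \<in> G1"
  have "t = Fun a []"
    using aeval_constant_root[OF assms(4,5) crossing_free_CAppD[OF assms(1)] assms(2,3)] by simp
  then show False using assms(1,5) last by (auto simp: crossing_free_def)
qed

lemma crossing_free_same_origin:
  assumes "crossing_free ar G1 G0 sc sv t" and "wf_subst ar sc sv" and "\<forall>a\<in>G0. ar a = 0"
    and "ANode f o1 cs \<in> asubtrees (aeval sc sv s p t)" and "f \<in> G1"
    and "ANode a o2 ds \<in> set cs" and "a \<in> G0"
  shows "o1 = o2"
  using assms(1,4)
proof (induction t arbitrary: p)
  case (Fun g ts)
  from Fun.prems(2) consider
      (root) "ANode f o1 cs = ANode g Expl (aevals sc sv s p 0 ts)"
    | (arg) c where "c \<in> set (aevals sc sv s p 0 ts)" "ANode f o1 cs \<in> asubtrees c"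
    unfolding aeval.simps asubtrees.simps by fastforce
  then show ?case
  proof cases
    case root
    then have o1: "o1 = Expl" and "ANode a o2 ds \<in> set (aevals sc sv s p 0 ts)"
      using assms(6) by auto
    then obtain q t where t: "t \<in> set ts" "aeval sc sv s q t = ANode a o2 ds"
      using aevals_elem by metis
    show ?thesis using aeval_constant_root[OF t(2) assms(7) crossing_free_FunD[OF Fun.prems(1) t(1)]
        assms(2,3)] o1 by simp
  next
    case arg
    then obtain q t where t: "t \<in> set ts" "c = aeval sc sv s q t"
      using aevals_elem by metis
    show ?thesis using Fun.IH[OF t(1) crossing_free_FunD[OF Fun.prems(1) t(1)]] arg(2) t(2) by simp
  qed
next
  case (Var x)
  then show ?case using asubtrees_lab[of "ANode f o1 cs"] assms(6) by force
next
  case (CApp Y t0)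
  let ?T = "aeval sc sv s (p @ [0]) t0"
  from CApp.prems(2) have "ANode f o1 cs \<in> asubtrees (fill_lab (Occ s p) (sc Y) ?T)" by simp
  from asubtrees_fill_lab[OF this] show ?case
  proof
    assume "ANode f o1 cs \<in> asubtrees ?T"
    then show ?thesis using CApp.IH[OF crossing_free_CAppD[OF CApp.prems(1)]] by blast
  next
    assume "\<exists>f' cs'. ANode f o1 cs = ANode f' (Occ s p) cs' \<and>
      (\<forall>c\<in>set cs'. origin c = Occ s p \<or> (c = ?T \<and> sc Y \<noteq> Hole \<and> f' = last_letter (sc Y)))"
    \<comment> \<open>only the father of the hole may have a child of another origin: the root of the argument\<close>
    then have "o1 = Occ s p" and "o2 = Occ s p \<or> (?T = ANode a o2 ds \<and> f = last_letter (sc Y))"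
      using assms(6) by auto
    then show ?thesis
      using crossing_free_CApp_arg_constant[OF CApp.prems(1) assms(2,3) _ assms(7)] assms(5) by auto
  qed
qed

lemma crossing_free_no_crossing_occ:
  assumes "crossing_free ar G1 G0 sc sv t" and "wf_subst ar sc sv" and "\<forall>a\<in>G0. ar a = 0"
    and "f \<in> G1" and "a \<in> G0"
  shows "\<not> crossing_occ ar (aeval sc sv s p t) f a"
  unfolding crossing_occ_def using crossing_free_same_origin[OF assms(1-3)] assms(4,5) by blast

section \<open>Completeness\<close>

lemma subterms_eq_map_eqE:
  assumes "s \<in> subterms_eq (map_eq g e)"
  obtains t where "t = fst e \<or> t = snd e" and "s \<in> subterms (g t)"
  using assms by (auto simp: subterms_eq_def)

lemma subterms_subset_subterms_eq: "t = fst e \<or> t = snd e \<Longrightarrow> subterms t \<subseteq> subterms_eq e"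
  by (auto simp: subterms_eq_def)

lemma CApp_in_subterms_repl_vars:
  "CApp Y s' \<in> subterms (repl_vars \<rho> t) \<Longrightarrow> \<exists>s. CApp Y s \<in> subterms t \<and> s' = repl_vars \<rho> s"
  by (induction t) (force split: option.splits)+

lemma vars_repl_vars: "vars (repl_vars \<rho> t) = {x \<in> vars t. \<rho> x = None}"
  by (induction t) (auto split: option.splits)

lemma repl_vars_eq_constant:
  "repl_vars \<rho> s = Fun a [] \<Longrightarrow> s = Fun a [] \<or> (\<exists>x. s = Var x \<and> \<rho> x = Some a)"
  by (cases s) (auto split: option.splits)

lemma cvars_repl_vars [simp]: "cvars (repl_vars \<rho> t) = cvars t"
  by (induction t) (auto split: option.splits)

lemma wf_trm_repl_vars:
  "\<forall>x c. \<rho> x = Some c \<longrightarrow> ar c = 0 \<Longrightarrow> wf_trm ar t \<Longrightarrow> wf_trm ar (repl_vars \<rho> t)"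
  by (induction t) (auto split: option.splits)

lemma CApp_in_subterms_pop_ctx:
  "CApp Y s' \<in> subterms (pop_ctx X f xs1 xs2 t) \<Longrightarrow> \<exists>s. CApp Y s \<in> subterms t \<and>
     s' = (if Y = X then Fun f (map Var xs1 @ [pop_ctx X f xs1 xs2 s] @ map Var xs2)
           else pop_ctx X f xs1 xs2 s)"
  by (induction t) (force split: if_splits)+

lemma vars_pop_ctx: "vars (pop_ctx X f xs1 xs2 t) \<subseteq> vars t \<union> set xs1 \<union> set xs2"
  by (induction t) auto

lemma cvars_pop_ctx [simp]: "cvars (pop_ctx X f xs1 xs2 t) = cvars t"
  by (induction t) auto

lemma wf_trm_pop_ctx:
  "length xs1 + 1 + length xs2 = ar f \<Longrightarrow> wf_trm ar t \<Longrightarrow> wf_trm ar (pop_ctx X f xs1 xs2 t)"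
  by (induction t) auto

lemma leaf_arg_pop_ctx:
  assumes "CApp Y s \<in> subterms_eq (map_eq (pop_ctx X f xs1 xs2) e)"
    and "s = Var x \<or> (s = Fun a [] \<and> a \<noteq> f)"
  shows "CApp Y s \<in> subterms_eq e \<and> Y \<noteq> X"
proof -
  obtain t where t: "t = fst e \<or> t = snd e" "CApp Y s \<in> subterms (pop_ctx X f xs1 xs2 t)"
    using assms(1) by (rule subterms_eq_map_eqE)
  obtain s0 where "CApp Y s0 \<in> subterms t"
    and "s = (if Y = X then Fun f (map Var xs1 @ [pop_ctx X f xs1 xs2 s0] @ map Var xs2)
              else pop_ctx X f xs1 xs2 s0)"
    using CApp_in_subterms_pop_ctx[OF t(2)] by blast
  with assms(2) have "CApp Y s \<in> subterms t \<and> Y \<noteq> X"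
    by (cases s0) (auto split: if_splits)
  with subterms_subset_subterms_eq[OF t(1)] show ?thesis by blast
qed

lemma arg_pop_ctx_root:
  assumes "CApp X s \<in> subterms_eq (map_eq (pop_ctx X f xs1 xs2) e)"
  shows "\<exists>ts. s = Fun f ts"
proof -
  obtain t where "CApp X s \<in> subterms (pop_ctx X f xs1 xs2 t)"
    using assms by (rule subterms_eq_map_eqE)
  then show ?thesis using CApp_in_subterms_pop_ctx[of X s X f xs1 xs2 t] by auto
qed

lemma CApp_in_subterms_remove_ctx:
  "CApp Y s' \<in> subterms (remove_ctx X t) \<Longrightarrow>
     Y \<noteq> X \<and> (\<exists>s. CApp Y s \<in> subterms t \<and> s' = remove_ctx X s)"
  by (induction t) (force split: if_splits)+

lemma vars_remove_ctx [simp]: "vars (remove_ctx X t) = vars t"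
  by (induction t) auto

lemma cvars_remove_ctx [simp]: "cvars (remove_ctx X t) = cvars t - {X}"
  by (induction t) auto

lemma wf_trm_remove_ctx: "wf_trm ar t \<Longrightarrow> wf_trm ar (remove_ctx X t)"
  by (induction t) auto

lemma leaf_arg_remove_ctx:
  assumes "CApp Y s \<in> subterms_eq (map_eq (remove_ctx X) e)"
    and "s = Var x \<or> (s = Fun a [] \<and> a \<in> G0)"
    and args: "\<forall>s. CApp X s \<in> subterms_eq e \<longrightarrow> (\<exists>g ts. s = Fun g ts \<and> g \<notin> G0)"
  shows "CApp Y s \<in> subterms_eq e"
proof -
  obtain t where t: "t = fst e \<or> t = snd e" "CApp Y s \<in> subterms (remove_ctx X t)"
    using assms(1) by (rule subterms_eq_map_eqE)
  obtain s0 where s0: "CApp Y s0 \<in> subterms t" "s = remove_ctx X s0"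
    using CApp_in_subterms_remove_ctx[OF t(2)] by blast
  have sub: "subterms t \<subseteq> subterms_eq e" using t(1) by (rule subterms_subset_subterms_eq)
  show ?thesis
  proof (cases s0)
    case (CApp Z s1)
    have "Z = X \<Longrightarrow> CApp X s1 \<in> subterms_eq e"
      using CApp_arg_in_subterms[OF s0(1)] CApp sub by auto
    then show ?thesis using assms(2) args s0(2) CApp by (cases "Z = X") auto
  qed (use s0 sub assms(2) in auto)
qed

definition guess_constants :: "'f set \<Rightarrow> ('v \<Rightarrow> 'f gterm) \<Rightarrow> 'v set \<Rightarrow> 'v \<Rightarrow> 'f option" where
  "guess_constants G0 sv W x = (if x \<in> W \<and> groot (sv x) \<in> G0 then Some (groot (sv x)) else None)"

lemma guess_constants_SomeD: "guess_constants G0 sv W x = Some c \<Longrightarrow> x \<in> W \<and> c \<in> G0"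
  by (simp add: guess_constants_def split: if_splits)

lemma wf_trm_repl_guess_constants:
  "\<forall>a\<in>G0. ar a = 0 \<Longrightarrow> wf_trm ar t \<Longrightarrow> wf_trm ar (repl_vars (guess_constants G0 sv W) t)"
  by (rule wf_trm_repl_vars) (auto dest: guess_constants_SomeD)

lemma gsubst_repl_guess_constants:
  assumes "wf_subst ar sc sv" and "\<forall>a\<in>G0. ar a = 0"
  shows "gsubst sc sv (repl_vars (guess_constants G0 sv W) t) = gsubst sc sv t"
proof -
  have "sv x = GFun c []" if "guess_constants G0 sv W x = Some c" for x c
    using that assms wf_gterm_constant[of ar "sv x"]
    by (auto simp: guess_constants_def wf_subst_def split: if_splits)
  then have "(\<lambda>x. case guess_constants G0 sv W x of None \<Rightarrow> sv x | Some c \<Rightarrow> GFun c []) = sv"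
    by (auto split: option.split)
  then show ?thesis by (simp add: gsubst_repl_vars)
qed

text \<open>\<open>V\<close> holds the variables of the input equation, which are the only arguments of context
  variables, \<open>D\<close> the context variables processed so far, and \<open>T\<close> the common value of both sides.\<close>

definition pop_invariant :: "('f \<Rightarrow> nat) \<Rightarrow> 'f set \<Rightarrow> 'f set \<Rightarrow> 'v set \<Rightarrow> 'f gterm \<Rightarrow> 'c set
    \<Rightarrow> ('c \<Rightarrow> 'f gctxt) \<Rightarrow> ('v \<Rightarrow> 'f gterm) \<Rightarrow> ('f,'v,'c) equation \<Rightarrow> bool" where
  "pop_invariant ar G1 G0 V T D sc sv e \<longleftrightarrow>
     is_solution ar sc sv e \<and> gsubst sc sv (fst e) = T \<and> wf_trm ar (fst e) \<and> wf_trm ar (snd e) \<and>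
     (\<forall>Y x. CApp Y (Var x) \<in> subterms_eq e \<longrightarrow> x \<in> V) \<and>
     (\<forall>x\<in>V \<inter> vars_eq e. groot (sv x) \<notin> G0) \<and>
     (\<forall>Y\<in>D. \<forall>a\<in>G0. last_letter (sc Y) \<in> G1 \<longrightarrow> CApp Y (Fun a []) \<notin> subterms_eq e)"

lemma pop_invariant_init:
  assumes "is_solution ar sc sv e" and "wf_trm ar (fst e)" and "wf_trm ar (snd e)"
    and G0: "\<forall>a\<in>G0. ar a = 0"
  shows "pop_invariant ar G1 G0 (vars_eq e) (gsubst sc sv (fst e)) {} sc sv
           (map_eq (repl_vars (guess_constants G0 sv UNIV)) e)"
proof -
  let ?\<rho> = "guess_constants G0 sv UNIV"
  let ?e' = "map_eq (repl_vars ?\<rho>) e"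
  have wsub: "wf_subst ar sc sv" using assms(1) by (simp add: is_solution_def)
  have vars: "vars_eq ?e' = {x \<in> vars_eq e. ?\<rho> x = None}"
    by (auto simp: vars_eq_def vars_repl_vars)
  have "x \<in> vars_eq e" if "CApp Y (Var x) \<in> subterms_eq ?e'" for Y x
  proof -
    have "Var x \<in> subterms_eq ?e'"
      using that CApp_arg_in_subterms[of Y "Var x"] unfolding subterms_eq_def by blast
    then show ?thesis
      using vars by (auto simp: subterms_eq_def vars_eq_def Var_in_subterms_iff)
  qed
  moreover have "groot (sv x) \<notin> G0" if "x \<in> vars_eq ?e'" for x
    using that vars by (auto simp: guess_constants_def split: if_splits)
  ultimately show ?thesis
    using assms(1-3)
    by (simp add: pop_invariant_def is_solution_def gsubst_repl_guess_constants[OF wsub G0]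
        wf_trm_repl_guess_constants[OF G0])
qed

lemma fresh_vars_with_values:
  fixes F :: "'v set"
  assumes "infinite (UNIV :: 'v set)" and "finite F"
  shows "\<exists>zs sv'. length zs = length ws \<and> distinct zs \<and> set zs \<inter> F = {} \<and> map sv' zs = ws \<and>
           (\<forall>x. x \<notin> set zs \<longrightarrow> sv' x = sv x)"
proof (induction ws)
  case (Cons w ws)
  then obtain zs sv' where zs: "length zs = length ws" "distinct zs" "set zs \<inter> F = {}"
    "map sv' zs = ws" "\<forall>x. x \<notin> set zs \<longrightarrow> sv' x = sv x"
    by blast
  obtain z where z: "z \<notin> F" "z \<notin> set zs"
    using ex_new_if_finite[OF assms(1), of "F \<union> set zs"] assms(2) by auto
  have "map (\<lambda>x. if x = z then w else sv' x) zs = map sv' zs"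
    using z(2) by (intro map_cong) auto
  then show ?case using zs z
    by (intro exI[of _ "z # zs"] exI[of _ "\<lambda>x. if x = z then w else sv' x"]) simp
qed (intro exI[of _ "[]"] exI[of _ sv], simp)

lemma fresh_vars_for_last_letter:
  fixes F :: "'v set"
  assumes "sc X = ccomp C (GCtx f l Hole r)" and "wf_subst ar sc sv"
    and "infinite (UNIV :: 'v set)" and "finite F"
  shows "\<exists>xs1 xs2 sv'. sc X = ccomp C (GCtx f (map sv' xs1) Hole (map sv' xs2)) \<and>
           length xs1 + 1 + length xs2 = ar f \<and> distinct (xs1 @ xs2) \<and> set (xs1 @ xs2) \<inter> F = {} \<and>
           (\<forall>x. x \<notin> set (xs1 @ xs2) \<longrightarrow> sv' x = sv x) \<and> wf_subst ar (sc(X := C)) sv'"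
proof -
  have "wf_gctxt ar (ccomp C (GCtx f l Hole r))"
    using assms(1,2) by (metis wf_subst_def)
  then have wC: "wf_gctxt ar C" and len: "length l + 1 + length r = ar f"
    and wlr: "\<forall>t\<in>set (l @ r). wf_gterm ar t"
    by (auto simp: wf_gctxt_ccomp)
  obtain zs sv' where zs: "length zs = length (l @ r)" "distinct zs" "set zs \<inter> F = {}"
      "map sv' zs = l @ r" "\<forall>x. x \<notin> set zs \<longrightarrow> sv' x = sv x"
    using fresh_vars_with_values[OF assms(3,4)] by blast
  define xs1 where "xs1 = take (length l) zs"
  define xs2 where "xs2 = drop (length l) zs"
  have zs12: "zs = xs1 @ xs2" by (simp add: xs1_def xs2_def)
  have "map sv' xs1 = l" "map sv' xs2 = r"
    using zs(4) by (simp_all add: xs1_def xs2_def flip: take_map drop_map)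
  moreover have "length xs1 + 1 + length xs2 = ar f"
    using zs(1) len by (simp add: xs1_def xs2_def)
  moreover have "wf_gterm ar (sv' x)" for x
  proof (cases "x \<in> set zs")
    case True
    then have "sv' x \<in> set (l @ r)" using zs(4) by (metis image_eqI list.set_map)
    then show ?thesis using wlr by blast
  next
    case False
    then show ?thesis using zs(5) assms(2) by (simp add: wf_subst_def)
  qed
  then have "wf_subst ar (sc(X := C)) sv'" using assms(2) wC by (simp add: wf_subst_def)
  ultimately show ?thesis
    using assms(1) zs(2,3,5) unfolding zs12 by blast
qed

lemma gsubst_pop_ctx_last:
  "sc X = ccomp C (GCtx f (map sv xs1) Hole (map sv xs2)) \<Longrightarrow>
     gsubst (sc(X := C)) sv (pop_ctx X f xs1 xs2 t) = gsubst sc sv t"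
  by (simp add: gsubst_pop_ctx fun_upd_idem)

lemma pop_invariant_pop_ctx:
  assumes inv: "pop_invariant ar G1 G0 V T D sc sv e"
    and last: "sc X = ccomp C (GCtx f (map sv' xs1) Hole (map sv' xs2))"
    and len: "length xs1 + 1 + length xs2 = ar f"
    and fresh: "set (xs1 @ xs2) \<inter> (V \<union> vars_eq e) = {}" "\<forall>x. x \<notin> set (xs1 @ xs2) \<longrightarrow> sv' x = sv x"
    and wsub: "wf_subst ar (sc(X := C)) sv'"
    and f: "f \<notin> G0" "\<forall>a\<in>G0. ar a = 0"
  shows "pop_invariant ar G1 G0 V T (insert X D) (sc(X := C)) sv' (map_eq (pop_ctx X f xs1 xs2) e)"
proof -
  let ?e' = "map_eq (pop_ctx X f xs1 xs2) e"
  have "gsubst (sc(X := C)) sv' (pop_ctx X f xs1 xs2 t) = gsubst sc sv t" if "t = fst e \<or> t = snd e" for t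
  proof -
    have "gsubst (sc(X := C)) sv' (pop_ctx X f xs1 xs2 t) = gsubst sc sv' t"
      using gsubst_pop_ctx_last[where sc = sc and X = X, OF last] .
    also have "\<dots> = gsubst sc sv t"
      using that fresh by (intro gsubst_cong) (auto simp: vars_eq_def)
    finally show ?thesis .
  qed
  then have "is_solution ar (sc(X := C)) sv' ?e' \<and> gsubst (sc(X := C)) sv' (fst ?e') = T"
    using inv wsub by (auto simp: pop_invariant_def is_solution_def)
  moreover have "wf_trm ar (fst ?e')" "wf_trm ar (snd ?e')"
    using inv wf_trm_pop_ctx[of xs1 xs2 ar f, OF len] unfolding pop_invariant_def by auto
  moreover have "V \<inter> vars_eq ?e' \<subseteq> vars_eq e" and "\<forall>x\<in>V. sv' x = sv x"
    using fresh vars_pop_ctx[of X f xs1 xs2 "fst e"] vars_pop_ctx[of X f xs1 xs2 "snd e"]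
    by (auto simp: vars_eq_def)
  moreover have "CApp Y (Var x) \<in> subterms_eq e" if "CApp Y (Var x) \<in> subterms_eq ?e'" for Y x
    using leaf_arg_pop_ctx[OF that] by blast
  moreover have "CApp Y (Fun a []) \<in> subterms_eq e \<and> Y \<noteq> X"
    if "CApp Y (Fun a []) \<in> subterms_eq ?e'" "a \<in> G0" for Y a
    using leaf_arg_pop_ctx[OF that(1)] that(2) f(1) by blast
  ultimately show ?thesis using inv unfolding pop_invariant_def by fastforce
qed

lemma pop_invariant_remove_ctx:
  assumes inv: "pop_invariant ar G1 G0 V T D sc sv e" and hole: "sc X = Hole"
    and args: "\<forall>s. CApp X s \<in> subterms_eq e \<longrightarrow> (\<exists>g ts. s = Fun g ts \<and> g \<notin> G0)"
  shows "pop_invariant ar G1 G0 V T D sc sv (map_eq (remove_ctx X) e)"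
proof -
  let ?e' = "map_eq (remove_ctx X) e"
  have "sc(X := Hole) = sc" using hole by auto
  then have "is_solution ar sc sv ?e' \<and> gsubst sc sv (fst ?e') = T"
    using inv by (auto simp: pop_invariant_def is_solution_def gsubst_remove_ctx)
  moreover have "wf_trm ar (fst ?e')" "wf_trm ar (snd ?e')"
    using inv by (simp_all add: pop_invariant_def wf_trm_remove_ctx)
  moreover have "vars_eq ?e' = vars_eq e" by (simp add: vars_eq_def)
  moreover have "CApp Y (Var x) \<in> subterms_eq e" if "CApp Y (Var x) \<in> subterms_eq ?e'" for Y x
    using leaf_arg_remove_ctx[OF that _ args] by blast
  moreover have "CApp Y (Fun a []) \<in> subterms_eq e"
    if "CApp Y (Fun a []) \<in> subterms_eq ?e'" "a \<in> G0" for Y a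
    using leaf_arg_remove_ctx[OF that(1) _ args] that(2) by blast
  ultimately show ?thesis using inv unfolding pop_invariant_def by (metis (no_types, lifting))
qed

lemma pop_invariant_unpopped:
  assumes inv: "pop_invariant ar G1 G0 V T D sc sv e" and ne: "nonempty_sol sc e"
    and unpopped: "\<not> (sc X \<noteq> Hole \<and> last_letter (sc X) \<in> G1 \<and> (\<exists>a\<in>G0. CApp X (Fun a []) \<in> subterms_eq e))"
  shows "pop_invariant ar G1 G0 V T (insert X D) sc sv e"
proof -
  have "CApp X (Fun a []) \<notin> subterms_eq e" if "a \<in> G0" "last_letter (sc X) \<in> G1" for a
  proof
    assume capp: "CApp X (Fun a []) \<in> subterms_eq e"
    then have "X \<in> cvars_eq e"
      by (auto simp: cvars_eq_def subterms_eq_def cvars_iff_CApp_in_subterms)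
    then show False using unpopped ne that capp by (auto simp: nonempty_sol_def)
  qed
  then show ?thesis using inv by (auto simp: pop_invariant_def)
qed

lemma pop_step_last_letter:
  fixes e :: "('f,'v,'c) equation"
  assumes inv: "pop_invariant ar G1 G0 V T D sc sv e"
    and last: "sc X = ccomp C (GCtx f l Hole r)" and f: "f \<in> G1"
    and a: "a \<in> G0" "CApp X (Fun a []) \<in> subterms_eq e"
    and fresh: "infinite (UNIV :: 'v set)" "finite V"
    and ar: "\<forall>f\<in>G1. 1 \<le> ar f" "\<forall>a\<in>G0. ar a = 0"
  shows "\<exists>xs1 xs2 sv'. pop_step ar G1 G0 V X e (map_eq (pop_ctx X f xs1 xs2) e) \<and>
           pop_invariant ar G1 G0 V T (insert X D) (sc(X := C)) sv' (map_eq (pop_ctx X f xs1 xs2) e)"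
proof -
  have f0: "f \<notin> G0" using f ar by fastforce
  have wsub: "wf_subst ar sc sv" using inv by (simp add: pop_invariant_def is_solution_def)
  have fin: "finite (V \<union> vars_eq e)" using fresh(2) by (simp add: vars_eq_def finite_vars)
  obtain xs1 xs2 sv' where
      last': "sc X = ccomp C (GCtx f (map sv' xs1) Hole (map sv' xs2))"
    and len: "length xs1 + 1 + length xs2 = ar f" and "distinct (xs1 @ xs2)"
    and vs: "set (xs1 @ xs2) \<inter> (V \<union> vars_eq e) = {}" "\<forall>x. x \<notin> set (xs1 @ xs2) \<longrightarrow> sv' x = sv x"
    and wsub': "wf_subst ar (sc(X := C)) sv'"
    using fresh_vars_for_last_letter[where sc = sc and X = X, OF last wsub fresh(1) fin] by blast
  have "pop_step ar G1 G0 V X e (map_eq (pop_ctx X f xs1 xs2) e)"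
    unfolding pop_step_def
    by (intro disjI2 exI[of _ f] exI[of _ xs1] exI[of _ xs2] exI[of _ a])
      (use f a len \<open>distinct (xs1 @ xs2)\<close> vs(1) in simp)
  then show ?thesis using pop_invariant_pop_ctx[OF inv last' len vs wsub' f0 ar(2)] by blast
qed

lemma cvar_step_pop_last_letter:
  fixes e :: "('f,'v,'c) equation"
  assumes inv: "pop_invariant ar G1 G0 V T D sc sv e" and ne: "nonempty_sol sc e"
    and last: "sc X = ccomp C (GCtx f l Hole r)" and f: "f \<in> G1"
    and a: "a \<in> G0" "CApp X (Fun a []) \<in> subterms_eq e"
    and fresh: "infinite (UNIV :: 'v set)" "finite V"
    and ar: "\<forall>f\<in>G1. 1 \<le> ar f" "\<forall>a\<in>G0. ar a = 0"
  shows "\<exists>e' sc' sv'. cvar_step ar G1 G0 V X e e' \<and>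
           pop_invariant ar G1 G0 V T (insert X D) sc' sv' e' \<and> nonempty_sol sc' e'"
proof -
  obtain xs1 xs2 sv' where step: "pop_step ar G1 G0 V X e (map_eq (pop_ctx X f xs1 xs2) e)"
    and inv1: "pop_invariant ar G1 G0 V T (insert X D) (sc(X := C)) sv' (map_eq (pop_ctx X f xs1 xs2) e)"
    using pop_step_last_letter[OF inv last f a fresh ar] by blast
  define e1 where "e1 = map_eq (pop_ctx X f xs1 xs2) e"
  have cv: "cvars_eq e1 = cvars_eq e" by (simp add: e1_def cvars_eq_def)
  show ?thesis
  proof (cases "C = Hole")
    case True
    have "\<exists>g ts. s = Fun g ts \<and> g \<notin> G0" if "CApp X s \<in> subterms_eq e1" for s
      using arg_pop_ctx_root[of X s f xs1 xs2 e] that f ar unfolding e1_def by fastforce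
    then have "pop_invariant ar G1 G0 V T (insert X D) (sc(X := C)) sv' (map_eq (remove_ctx X) e1)"
      using pop_invariant_remove_ctx[OF inv1[folded e1_def]] True by simp
    moreover have "cvar_step ar G1 G0 V X e (map_eq (remove_ctx X) e1)"
      unfolding cvar_step_def e1_def using step by blast
    moreover have "nonempty_sol (sc(X := C)) (map_eq (remove_ctx X) e1)"
      using ne cv by (auto simp: nonempty_sol_def cvars_eq_def)
    ultimately show ?thesis by blast
  next
    case False
    have "cvar_step ar G1 G0 V X e e1" unfolding cvar_step_def e1_def using step by blast
    moreover have "nonempty_sol (sc(X := C)) e1" using ne cv False by (auto simp: nonempty_sol_def)
    ultimately show ?thesis using inv1 unfolding e1_def by blast
  qed
qed

lemma cvar_step_pop_invariant:
  fixes e :: "('f,'v,'c) equation"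
  assumes inv: "pop_invariant ar G1 G0 V T D sc sv e" and ne: "nonempty_sol sc e"
    and fresh: "infinite (UNIV :: 'v set)" "finite V"
    and ar: "\<forall>f\<in>G1. 1 \<le> ar f" "\<forall>a\<in>G0. ar a = 0"
  shows "\<exists>e' sc' sv'. cvar_step ar G1 G0 V X e e' \<and>
           pop_invariant ar G1 G0 V T (insert X D) sc' sv' e' \<and> nonempty_sol sc' e'"
proof (cases "sc X \<noteq> Hole \<and> last_letter (sc X) \<in> G1 \<and> (\<exists>a\<in>G0. CApp X (Fun a []) \<in> subterms_eq e)")
  case True
  then obtain a where a: "a \<in> G0" "CApp X (Fun a []) \<in> subterms_eq e" by blast
  obtain C f l r where last: "sc X = ccomp C (GCtx f l Hole r)"
    using gctxt_split_last[of "sc X"] True by blast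
  have "f \<in> G1" using True last last_letter_ccomp[of C f l r] by simp
  then show ?thesis using cvar_step_pop_last_letter[OF inv ne last _ a fresh ar] by blast
next
  case False
  have "cvar_step ar G1 G0 V X e e" unfolding cvar_step_def pop_step_def by blast
  then show ?thesis using pop_invariant_unpopped[OF inv ne False] ne by blast
qed

lemma cvar_steps_pop_invariant:
  fixes e :: "('f,'v,'c) equation"
  assumes "pop_invariant ar G1 G0 V T D sc sv e" and "nonempty_sol sc e"
    and fresh: "infinite (UNIV :: 'v set)" "finite V"
    and ar: "\<forall>f\<in>G1. 1 \<le> ar f" "\<forall>a\<in>G0. ar a = 0"
  shows "\<exists>e' sc' sv'. cvar_steps ar G1 G0 V Xs e e' \<and>
           pop_invariant ar G1 G0 V T (D \<union> set Xs) sc' sv' e' \<and> nonempty_sol sc' e'"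
  using assms(1,2)
proof (induction Xs arbitrary: D e sc sv)
  case (Cons X Xs)
  obtain e1 sc1 sv1 where "cvar_step ar G1 G0 V X e e1"
    and "pop_invariant ar G1 G0 V T (insert X D) sc1 sv1 e1" and "nonempty_sol sc1 e1"
    using cvar_step_pop_invariant[OF Cons.prems fresh ar] by blast
  moreover from this(2,3) obtain e' sc' sv' where "cvar_steps ar G1 G0 V Xs e1 e'"
    and "pop_invariant ar G1 G0 V T (insert X D \<union> set Xs) sc' sv' e'" and "nonempty_sol sc' e'"
    using Cons.IH by blast
  moreover have "insert X D \<union> set Xs = D \<union> set (X # Xs)" by simp
  ultimately show ?case by (metis cvar_steps.simps(2))
qed auto

lemma cvars_eq_cvar_steps: "cvar_steps ar G1 G0 V Xs e e' \<Longrightarrow> cvars_eq e' \<subseteq> cvars_eq e"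
proof (induction Xs arbitrary: e)
  case (Cons X Xs)
  then obtain e1 where "cvar_step ar G1 G0 V X e e1" "cvars_eq e' \<subseteq> cvars_eq e1" by auto
  moreover have "cvar_step ar G1 G0 V X e e1 \<Longrightarrow> cvars_eq e1 \<subseteq> cvars_eq e"
    by (auto simp: cvar_step_def pop_step_def cvars_eq_def)
  ultimately show ?case by blast
qed simp

lemma crossing_free_repl_fresh:
  assumes inv: "pop_invariant ar G1 G0 V T D sc sv e" and ne: "nonempty_sol sc e"
    and D: "cvars_eq e \<subseteq> D" and t: "t = fst e \<or> t = snd e" and G0: "\<forall>a\<in>G0. ar a = 0"
  shows "crossing_free ar G1 G0 sc sv (repl_vars (guess_constants G0 sv (- V)) t)"
proof -
  let ?\<rho> = "guess_constants G0 sv (- V)"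
  have sub: "subterms t \<subseteq> subterms_eq e" using t by (rule subterms_subset_subterms_eq)
  have "wf_trm ar (repl_vars ?\<rho> t)"
    using inv t wf_trm_repl_guess_constants[OF G0] by (auto simp: pop_invariant_def)
  moreover have "groot (sv x) \<notin> G0" if "Var x \<in> subterms (repl_vars ?\<rho> t)" for x
  proof -
    have "x \<in> vars t" "?\<rho> x = None" using that by (auto simp: Var_in_subterms_iff vars_repl_vars)
    then show ?thesis
      using inv t by (cases "x \<in> V") (auto simp: pop_invariant_def vars_eq_def guess_constants_def)
  qed
  moreover have "sc Y \<noteq> Hole \<and> (last_letter (sc Y) \<in> G1 \<longrightarrow> (\<forall>a\<in>G0. s' \<noteq> Fun a []))"
    if Ys': "CApp Y s' \<in> subterms (repl_vars ?\<rho> t)" for Y s'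
  proof -
    obtain s where s: "CApp Y s \<in> subterms_eq e" "s' = repl_vars ?\<rho> s"
      using CApp_in_subterms_repl_vars[OF Ys'] sub by blast
    then have "Y \<in> cvars_eq e"
      by (auto simp: cvars_eq_def subterms_eq_def cvars_iff_CApp_in_subterms)
    then have "sc Y \<noteq> Hole" "Y \<in> D" using ne D by (auto simp: nonempty_sol_def)
    moreover have False if "last_letter (sc Y) \<in> G1" "a \<in> G0" "s' = Fun a []" for a
      using repl_vars_eq_constant[of ?\<rho> s a] that s inv \<open>Y \<in> D\<close>
      by (auto simp: pop_invariant_def dest: guess_constants_SomeD)
    ultimately show ?thesis by blast
  qed
  ultimately show ?thesis by (simp add: crossing_free_def)
qed

lemma no_crossing_pair_repl_fresh:
  assumes inv: "pop_invariant ar G1 G0 V T D sc sv e" and ne: "nonempty_sol sc e"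
    and D: "cvars_eq e \<subseteq> D" and G0: "\<forall>a\<in>G0. ar a = 0"
  shows "\<not> (\<exists>f a. f \<in> G1 \<and> a \<in> G0 \<and>
           crossing_pair ar sc sv (map_eq (repl_vars (guess_constants G0 sv (- V))) e) f a)"
proof -
  let ?\<rho> = "guess_constants G0 sv (- V)"
  have wsub: "wf_subst ar sc sv" using inv by (simp add: pop_invariant_def is_solution_def)
  have "crossing_free ar G1 G0 sc sv (repl_vars ?\<rho> (fst e))"
    and "crossing_free ar G1 G0 sc sv (repl_vars ?\<rho> (snd e))"
    using crossing_free_repl_fresh[OF inv ne D _ G0] by auto
  then show ?thesis
    unfolding crossing_pair_def using crossing_free_no_crossing_occ[OF _ wsub G0] by auto
qed

theorem proc_complete:
  fixes u v :: "('f,'v,'c) trm"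
  assumes fresh: "infinite (UNIV :: 'v set)"
    and ar: "\<forall>f\<in>G1. 1 \<le> ar f" "\<forall>a\<in>G0. ar a = 0"
    and wf: "wf_trm ar u" "wf_trm ar v"
    and sol: "is_solution ar sc sv (u, v)" "nonempty_sol sc (u, v)"
  shows "\<exists>u' v' sc' sv'. proc ar G1 G0 (u, v) (u', v') \<and>
           is_solution ar sc' sv' (u', v') \<and> nonempty_sol sc' (u', v') \<and>
           gsubst sc' sv' u' = gsubst sc sv u \<and>
           \<not> (\<exists>f a. f \<in> G1 \<and> a \<in> G0 \<and> crossing_pair ar sc' sv' (u', v') f a)"
proof -
  define V where "V = vars_eq (u, v)"
  define e1 where "e1 = map_eq (repl_vars (guess_constants G0 sv UNIV)) (u, v)"
  have inv1: "pop_invariant ar G1 G0 V (gsubst sc sv u) {} sc sv e1"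
    using pop_invariant_init[OF sol(1) _ _ ar(2)] wf by (simp add: V_def e1_def)
  have cv1: "cvars_eq e1 = cvars_eq (u, v)" by (simp add: e1_def cvars_eq_def)
  then have ne1: "nonempty_sol sc e1" using sol(2) by (simp add: nonempty_sol_def)
  obtain Xs where Xs: "distinct Xs" "set Xs = cvars_eq (u, v)"
    using finite_distinct_list[of "cvars_eq (u, v)"] by (auto simp: cvars_eq_def finite_cvars)
  have "finite V" by (simp add: V_def vars_eq_def finite_vars)
  then obtain e2 sc' sv' where steps: "cvar_steps ar G1 G0 V Xs e1 e2"
    and inv2: "pop_invariant ar G1 G0 V (gsubst sc sv u) (set Xs) sc' sv' e2" and ne2: "nonempty_sol sc' e2"
    using cvar_steps_pop_invariant[OF inv1 ne1 fresh _ ar, of Xs] by auto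
  define \<rho>2 where "\<rho>2 = guess_constants G0 sv' (- V)"
  define u' where "u' = repl_vars \<rho>2 (fst e2)"
  define v' where "v' = repl_vars \<rho>2 (snd e2)"
  have e': "(u', v') = map_eq (repl_vars \<rho>2) e2" by (simp add: u'_def v'_def map_eq_def)
  have "proc ar G1 G0 (u, v) (u', v')"
    unfolding proc_def
    by (rule exI[of _ "guess_constants G0 sv UNIV"], rule exI[of _ \<rho>2], rule exI[of _ Xs],
        rule exI[of _ e2])
      (use Xs steps e' in \<open>auto simp: V_def e1_def \<rho>2_def guess_constants_def\<close>)
  moreover have "is_solution ar sc' sv' (u', v') \<and> gsubst sc' sv' u' = gsubst sc sv u"
    using inv2 gsubst_repl_guess_constants[of ar sc' sv' G0 "- V"] ar(2)
    by (auto simp: pop_invariant_def is_solution_def u'_def v'_def \<rho>2_def)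
  moreover have "nonempty_sol sc' (u', v')"
    using ne2 by (simp add: nonempty_sol_def cvars_eq_def u'_def v'_def)
  moreover have "cvars_eq e2 \<subseteq> set Xs" using cvars_eq_cvar_steps[OF steps] cv1 Xs(2) by simp
  then have "\<not> (\<exists>f a. f \<in> G1 \<and> a \<in> G0 \<and> crossing_pair ar sc' sv' (u', v') f a)"
    using no_crossing_pair_repl_fresh[OF inv2 ne2 _ ar(2)] unfolding e' \<rho>2_def by blast
  ultimately show ?thesis by blast
qed

theorem lemma5p3:
  fixes ar :: "'f \<Rightarrow> nat" and G1 G0 :: "'f set" and u v :: "('f,'v,'c) trm"
  assumes "infinite (UNIV :: 'v set)"
    and "\<forall>f\<in>G1. 1 \<le> ar f" and "\<forall>a\<in>G0. ar a = 0"
    and "wf_trm ar u" and "wf_trm ar v"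
  shows "(\<forall>u' v'. proc ar G1 G0 (u, v) (u', v') \<longrightarrow>
             (\<exists>sc' sv'. is_solution ar sc' sv' (u', v')) \<longrightarrow>
             (\<exists>sc sv. is_solution ar sc sv (u, v)))
       \<and> (\<forall>sc sv. is_solution ar sc sv (u, v) \<and> nonempty_sol sc (u, v) \<longrightarrow>
             (\<exists>u' v' sc' sv'. proc ar G1 G0 (u, v) (u', v') \<and>
                is_solution ar sc' sv' (u', v') \<and> nonempty_sol sc' (u', v') \<and>
                gsubst sc' sv' u' = gsubst sc sv u \<and>
                \<not> (\<exists>f a. f \<in> G1 \<and> a \<in> G0 \<and> crossing_pair ar sc' sv' (u', v') f a)))"
  using proc_sound[OF assms(3)] proc_complete[OF assms] by blast

end
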